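(* Let $\mathcal{X}$ be a finite alphabet with $|\mathcal{X}|\ge 2$, and consider the Ising channel with alphabet $\mathcal{X}$ (defined in the context), used with noiseless causal output feedback. There exists a feedback coding scheme for this channel that achieves the rate $$R(\mathcal{X}) = \max_{p \in [0,1]} 2\,\frac{H_2(p) + (1-p) \log_2\left(|\mathcal{X}|-1\right)}{p+3}.$$
   Context: The Ising channel with alphabet $\mathcal{X}$ is a finite-state channel with input $X_t\in\mathcal{X}$, output $Y_t\in\mathcal{X}$ and state $S_{t-1}\in\mathcal{X}$. At each time $t$, given the current input $x_t$, the state $s_{t-1}$ and all the past, the output is $Y_t=x_t$ with probability $1/2$ and $Y_t=s_{t-1}$ with probability $1/2$, independently of everything else. The state then updates as $S_t=X_t$. The initial state $s_0$ is known to both encoder and decoder. With feedback, the encoder chooses $x_t$ as a function of the message and the past outputs $y^{t-1}$. A rate is achievable if there exist feedback codes at that rate, in bits per channel use, with error probability tending to zero. $H_2(p)=-p\log_2 p-(1-p)\log_2(1-p)$ is the binary entropy function. *)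

theory Defs
  imports "HOL-Probability.Probability"
begin

definition H2 :: "real \<Rightarrow> real" where
  "H2 p = (if p = 0 \<or> p = 1 then 0 else - p * log 2 p - (1 - p) * log 2 (1 - p))"

text \<open>One use of the Ising channel: input x, state s (previous input).
  Output is x with probability 1/2 and s with probability 1/2.\<close>
definition ising_step :: "'a \<Rightarrow> 'a \<Rightarrow> 'a pmf" where
  "ising_step x s = map_pmf (\<lambda>b. if b then x else s) (bernoulli_pmf (1/2))"

text \<open>The encoder enc maps the
  message m and the past outputs ys (the feedback) to the next input.
  run_ising enc m s ys k: the current channel state is s, the outputs so far
  are ys, and k further channel uses remain; the result is the distribution
  of the complete output sequence.\<close>
fun run_ising :: "(nat \<Rightarrow> 'a list \<Rightarrow> 'a) \<Rightarrow> nat \<Rightarrow> 'a \<Rightarrow> 'a list \<Rightarrow> nat \<Rightarrow> 'a list pmf" where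
  "run_ising enc m s ys 0 = return_pmf ys"
| "run_ising enc m s ys (Suc k) =
     bind_pmf (ising_step (enc m ys) s) (\<lambda>y. run_ising enc m (enc m ys) (ys @ [y]) k)"

definition fb_error :: "'a \<Rightarrow> nat \<Rightarrow> nat \<Rightarrow> (nat \<Rightarrow> 'a list \<Rightarrow> 'a) \<Rightarrow> ('a list \<Rightarrow> nat) \<Rightarrow> real" where
  "fb_error s0 n M enc dec =
     (\<Sum>m<M. measure_pmf.prob (run_ising enc m s0 [] n) {ys. dec ys \<noteq> m}) / real M"

definition fb_achievable :: "'a \<Rightarrow> real \<Rightarrow> bool" where
  "fb_achievable s0 R \<longleftrightarrow>
     (\<forall>\<epsilon>>0. \<exists>N. \<forall>n\<ge>N. \<exists>M enc dec.
        M \<ge> 1 \<and> real M \<ge> 2 powr (real n * (R - \<epsilon>)) \<and> fb_error s0 n M enc dec \<le> \<epsilon>)"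

definition ising_rate :: "nat \<Rightarrow> real" where
  "ising_rate k = (SUP p\<in>{0..1::real}. 2 * (H2 p + (1 - p) * log 2 (real k - 1)) / (p + 3))"

end

theory Submission
  imports Defs "HOL-Real_Asymp.Real_Asymp"
begin

(* The decoder tracks the channel state, which is the last decoded symbol s. An output different
   from s must be the current input, which is thereby decoded. An output equal to s is ambiguous;
   the encoder then sends the same symbol once more, the channel state now equals the input, and
   the next output reveals the symbol. So a symbol costs two channel uses if it repeats its
   predecessor and one or two uses, with probability 1/2 each, otherwise.
   The codebook consists of all words of length S with exactly q S repetitions. There are
   (S choose q S) (|X| - 1)^((1 - q) S), about 2^(S (H2 q + (1 - q) log2 (|X| - 1))), of them, and
   each needs on average S (2 q + 3/2 (1 - q)) = S (3 + q) / 2 channel uses. A Chernoff bound,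
   in the form of a supermartingale z^(-k) E[z^T] on the decoder states, shows that slightly
   more channel uses suffice for every message. Letting z tend to 1 and q range over fractions
   gives every rate below the supremum. *)

section \<open>Decoding by tracking the channel state\<close>

lemma prob_bind_ising_step:
  "measure_pmf.prob (bind_pmf (ising_step x s) f) E =
     (measure_pmf.prob (f x) E + measure_pmf.prob (f s) E) / 2"
  unfolding ising_step_def bind_map_pmf measure_pmf_bind
  by (subst measure_pmf.measure_bind[where N="count_space UNIV"])
     (auto simp: measure_pmf_in_subprob_algebra)

(* Decoder state (s, pending, ds): s is the last decoded symbol (initially s0) and ds the list of
   decoded symbols; pending means that the last output equalled s. *)
definition dec_step :: "'a \<times> bool \<times> 'a list \<Rightarrow> 'a \<Rightarrow> 'a \<times> bool \<times> 'a list" where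
  "dec_step = (\<lambda>(s, pending, ds) y.
     if pending \<or> y \<noteq> s then (y, False, ds @ [y]) else (s, True, ds))"

definition dec_state :: "'a \<Rightarrow> 'a list \<Rightarrow> 'a \<times> bool \<times> 'a list" where
  "dec_state s0 ys = foldl dec_step (s0, False, []) ys"

definition decoded :: "'a \<Rightarrow> 'a list \<Rightarrow> 'a list" where
  "decoded s0 ys = snd (snd (dec_state s0 ys))"

lemma dec_state_snoc: "dec_state s0 (ys @ [y]) = dec_step (dec_state s0 ys) y"
  by (simp add: dec_state_def)

(* U m i is the i-th symbol of the codeword of message m; U m 0 is the initial state. *)
definition codeword_encoder :: "'a \<Rightarrow> (nat \<Rightarrow> nat \<Rightarrow> 'a) \<Rightarrow> nat \<Rightarrow> 'a list \<Rightarrow> 'a" where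
  "codeword_encoder s0 U m ys = U m (Suc (length (decoded s0 ys)))"

(* E[z^T] for the number T of channel uses spent on symbol i. *)
definition symbol_mgf :: "(nat \<Rightarrow> 'a) \<Rightarrow> real \<Rightarrow> nat \<Rightarrow> real" where
  "symbol_mgf u z i = (if u i = u (i - 1) then z\<^sup>2 else z * (1 + z) / 2)"

definition tail_mgf :: "(nat \<Rightarrow> 'a) \<Rightarrow> real \<Rightarrow> nat \<Rightarrow> nat \<Rightarrow> real" where
  "tail_mgf u z S i = (\<Prod>l\<in>{i..S}. symbol_mgf u z l)"

(* E[z^T] for the number T of channel uses still needed to decode S symbols (while pending, the
   current symbol is decoded by the next output), except that it is 0 once they are decoded. *)
definition potential :: "(nat \<Rightarrow> 'a) \<Rightarrow> real \<Rightarrow> nat \<Rightarrow> 'a \<times> bool \<times> 'a list \<Rightarrow> real" where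
  "potential u z S = (\<lambda>(s, pending, ds).
     if S \<le> length ds then 0
     else (if pending then z else symbol_mgf u z (Suc (length ds))) * tail_mgf u z S (length ds + 2))"

lemma symbol_mgf_ge_1: "z \<ge> 1 \<Longrightarrow> symbol_mgf u z i \<ge> 1"
  unfolding symbol_mgf_def using mult_mono[of 1 z 2 "1 + z"] by simp

lemma tail_mgf_ge_1: "z \<ge> 1 \<Longrightarrow> tail_mgf u z S i \<ge> 1"
  unfolding tail_mgf_def by (rule prod_ge_1) (simp add: symbol_mgf_ge_1)

lemma tail_mgf_Suc: "i \<le> S \<Longrightarrow> tail_mgf u z S i = symbol_mgf u z i * tail_mgf u z S (Suc i)"
  unfolding tail_mgf_def by (simp add: prod.atLeast_Suc_atMost)

lemma potential_ge_1: "z \<ge> 1 \<Longrightarrow> length ds < S \<Longrightarrow> potential u z S (s, pending, ds) \<ge> 1"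
  unfolding potential_def
  by (auto intro!: mult_ge1_I simp: symbol_mgf_ge_1 tail_mgf_ge_1)

lemma potential_nonneg: "z \<ge> 1 \<Longrightarrow> potential u z S (s, pending, ds) \<ge> 0"
  using potential_ge_1[of z ds S u s pending] by (cases "length ds < S") (auto simp: potential_def)

lemma potential_le_tail_mgf:
  "z \<ge> 1 \<Longrightarrow> potential u z S (s, False, ds) \<le> tail_mgf u z S (Suc (length ds))"
  using tail_mgf_Suc[of "Suc (length ds)" S u z] tail_mgf_ge_1[of z u S "Suc (length ds)"]
  by (simp add: potential_def)

(* The decoder has recovered a prefix of the codeword u (with u 0 = s0) and c is the channel state. *)
definition in_sync :: "'a \<Rightarrow> (nat \<Rightarrow> 'a) \<Rightarrow> 'a list \<Rightarrow> 'a \<Rightarrow> bool" where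
  "in_sync s0 u ys c \<longleftrightarrow> (case dec_state s0 ys of (s, pending, ds) \<Rightarrow>
     ds = map u [1..<Suc (length ds)] \<and> s = u (length ds) \<and>
     c = (if pending then u (Suc (length ds)) else s))"

lemma in_sync_Nil: "u 0 = s0 \<Longrightarrow> in_sync s0 u [] s0"
  by (simp add: in_sync_def dec_state_def)

lemma in_sync_snoc:
  assumes "in_sync s0 u ys c" and "y = u (Suc (length (decoded s0 ys))) \<or> y = c"
  shows "in_sync s0 u (ys @ [y]) (u (Suc (length (decoded s0 ys))))"
proof -
  obtain s pending ds where st: "dec_state s0 ys = (s, pending, ds)"
    by (cases "dec_state s0 ys")
  show ?thesis
  proof (cases "pending \<or> y \<noteq> s")
    case True
    then have "y = u (Suc (length ds))"
      using assms st by (auto simp: in_sync_def decoded_def)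
    then show ?thesis
      using True assms(1) st by (simp add: in_sync_def decoded_def dec_state_snoc dec_step_def)
  next
    case False
    then show ?thesis
      using assms(1) st by (simp add: in_sync_def decoded_def dec_state_snoc dec_step_def)
  qed
qed

(* The potential, divided by z at every channel use, is a supermartingale. *)
lemma potential_dec_step:
  assumes "z \<ge> 1" and "in_sync s0 u ys c"
  defines "st \<equiv> dec_state s0 ys" and "x \<equiv> u (Suc (length (decoded s0 ys)))"
  shows "z * (potential u z S (dec_step st x) + potential u z S (dec_step st c)) / 2
    \<le> potential u z S st"
proof -
  obtain s pending ds where st: "st = (s, pending, ds)"
    by (cases st)
  have sync: "s = u (length ds)" "c = (if pending then x else s)" and x: "x = u (Suc (length ds))"
    using assms(2) st unfolding st_def x_def in_sync_def decoded_def by auto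
  let ?T = "tail_mgf u z S (length ds + 2)"
  have after_decoding: "potential u z S (dec_step st x) \<le> ?T" if "pending \<or> x \<noteq> s"
    using that st potential_le_tail_mgf[OF assms(1), of u S x "ds @ [x]"] by (auto simp: dec_step_def)
  show ?thesis
  proof (cases "S \<le> length ds")
    case True
    then show ?thesis
      using st by (auto simp: dec_step_def potential_def)
  next
    case False
    consider "pending" | "\<not> pending" "x = s" | "\<not> pending" "x \<noteq> s"
      by blast
    then show ?thesis
    proof cases
      case 1
      then show ?thesis
        using False st sync after_decoding assms(1) by (auto simp: potential_def)
    next
      case 2
      then show ?thesis
        using False st sync x by (simp add: dec_step_def potential_def symbol_mgf_def power2_eq_square)
    next
      case 3
      have "z * (potential u z S (dec_step st x) + z * ?T) / 2 \<le> z * (?T + z * ?T) / 2"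
        using after_decoding 3 assms(1) by (simp add: mult_left_mono)
      then show ?thesis
        using 3 False st sync x by (auto simp: dec_step_def potential_def symbol_mgf_def field_simps)
    qed
  qed
qed

lemma prob_undecoded_le:
  assumes "z \<ge> 1" and "in_sync s0 (U m) ys c"
  shows "measure_pmf.prob (run_ising (codeword_encoder s0 U) m c ys k)
      {ys'. take S (decoded s0 ys') \<noteq> map (U m) [1..<Suc S]}
    \<le> potential (U m) z S (dec_state s0 ys) / z ^ k"
  using assms(2)
proof (induction k arbitrary: ys c)
  case 0
  obtain s pending ds where st: "dec_state s0 ys = (s, pending, ds)"
    by (cases "dec_state s0 ys")
  show ?case
  proof (cases "S \<le> length ds")
    case True
    have "ds = map (U m) [1..<Suc (length ds)]"
      using "0.prems" st by (simp add: in_sync_def)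
    moreover have "take S (map (U m) [1..<Suc (length ds)]) = map (U m) [1..<Suc S]"
      using True by (simp add: take_map del: upt_Suc)
    ultimately have "take S ds = map (U m) [1..<Suc S]"
      by simp
    then show ?thesis
      using st potential_nonneg[OF assms(1)] by (simp add: decoded_def measure_pmf_zero_iff)
  next
    case False
    then show ?thesis
      using st potential_ge_1[OF assms(1), of ds S "U m" s pending] by (simp add: indicator_def)
  qed
next
  case (Suc k)
  let ?x = "U m (Suc (length (decoded s0 ys)))"
  let ?E = "{ys'. take S (decoded s0 ys') \<noteq> map (U m) [1..<Suc S]}"
  let ?P = "\<lambda>y. measure_pmf.prob (run_ising (codeword_encoder s0 U) m ?x (ys @ [y]) k) ?E"
  let ?V = "\<lambda>y. potential (U m) z S (dec_step (dec_state s0 ys) y)"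
  have IH: "?P y \<le> ?V y / z ^ k" if "y = ?x \<or> y = c" for y
    using Suc.IH[OF in_sync_snoc[OF Suc.prems that]] by (simp add: dec_state_snoc)
  have "measure_pmf.prob (run_ising (codeword_encoder s0 U) m c ys (Suc k)) ?E = (?P ?x + ?P c) / 2"
    by (simp add: codeword_encoder_def prob_bind_ising_step)
  also have "\<dots> \<le> (?V ?x / z ^ k + ?V c / z ^ k) / 2"
    by (intro divide_right_mono add_mono IH) simp_all
  also have "\<dots> = z * (?V ?x + ?V c) / 2 / z ^ Suc k"
    using assms(1) by (simp add: field_simps)
  also have "\<dots> \<le> potential (U m) z S (dec_state s0 ys) / z ^ Suc k"
    by (rule divide_right_mono[OF potential_dec_step[OF assms(1) Suc.prems]]) (use assms(1) in simp)
  finally show ?case .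
qed



section \<open>Codebooks of words with a fixed number of repetitions\<close>

fun repetitions :: "'a \<Rightarrow> 'a list \<Rightarrow> nat" where
  "repetitions s [] = 0"
| "repetitions s (x # xs) = of_bool (x = s) + repetitions x xs"

definition words_with_repetitions :: "'a \<Rightarrow> nat \<Rightarrow> nat \<Rightarrow> 'a list set" where
  "words_with_repetitions s n r = {xs. length xs = n \<and> repetitions s xs = r}"

lemma repetitions_le_length: "repetitions s xs \<le> length xs"
  by (induction xs arbitrary: s) (simp_all add: le_SucI)

lemma finite_Collect_length_eq: "finite {xs :: 'a::finite list. length xs = n \<and> P xs}"
  using finite_lists_length_eq[of "UNIV :: 'a set" n] by (rule rev_finite_subset) auto

lemma card_words_with_repetitions:
  fixes s :: "'a::finite"
  shows "card (words_with_repetitions s n r) = (n choose r) * (CARD('a) - 1) ^ (n - r)"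
proof (induction n arbitrary: s r)
  case 0
  have "words_with_repetitions s 0 r = (if r = 0 then {[]} else {})"
    by (auto simp: words_with_repetitions_def)
  then show ?case
    by simp
next
  case (Suc n)
  define K where "K = CARD('a) - 1"
  define W where "W x = {xs. length xs = n \<and> of_bool (x = s) + repetitions x xs = r}" for x
  have "words_with_repetitions s (Suc n) r = (\<Union>x. (#) x ` W x)"
  proof (rule set_eqI)
    show "xs \<in> words_with_repetitions s (Suc n) r \<longleftrightarrow> xs \<in> (\<Union>x. (#) x ` W x)" for xs
      by (cases xs) (auto simp: words_with_repetitions_def W_def)
  qed
  then have "card (words_with_repetitions s (Suc n) r) = (\<Sum>x\<in>UNIV. card ((#) x ` W x))"
    by (simp only:) (rule card_UN_disjoint, auto simp: W_def finite_Collect_length_eq)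
  also have "\<dots> = (\<Sum>x\<in>UNIV. card (W x))"
    by (simp add: card_image)
  also have "\<dots> = card (W s) + (\<Sum>x\<in>UNIV - {s}. card (W x))"
    by (simp add: sum.remove)
  also have "(\<Sum>x\<in>UNIV - {s}. card (W x)) = K * ((n choose r) * K ^ (n - r))"
    using Suc.IH by (simp add: W_def words_with_repetitions_def card_Diff_singleton K_def)
  also have "card (W s) = (if r = 0 then 0 else (n choose (r - 1)) * K ^ (n - (r - 1)))"
    using Suc.IH[of s "r - 1"] by (cases r) (simp_all add: W_def words_with_repetitions_def K_def)
  finally have card_Suc: "card (words_with_repetitions s (Suc n) r) =
      (if r = 0 then 0 else (n choose (r - 1)) * K ^ (n - (r - 1))) + K * ((n choose r) * K ^ (n - r))" .
  show ?case
  proof (cases r)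
    case 0
    then show ?thesis
      using card_Suc by (simp add: K_def)
  next
    case (Suc r')
    have "K * ((n choose r) * K ^ (n - r)) = (n choose r) * K ^ (n - r')"
      using Suc by (cases "r \<le> n") (simp_all add: binomial_eq_0 Suc_diff_Suc[symmetric])
    then show ?thesis
      using card_Suc Suc by (simp add: K_def algebra_simps)
  qed
qed

lemma prod_repetitions:
  "(\<Prod>i\<in>{1..length xs}. if (s # xs) ! i = (s # xs) ! (i - 1) then a else b) =
     a ^ repetitions s xs * b ^ (length xs - repetitions s xs)"
proof (induction xs arbitrary: s)
  case (Cons x xs)
  let ?f = "\<lambda>s xs i. if (s # xs) ! i = (s # xs) ! (i - 1) then a else b"
  have "(\<Prod>i\<in>{1..length (x # xs)}. ?f s (x # xs) i) =
      ?f s (x # xs) 1 * (\<Prod>i\<in>{Suc 1..Suc (length xs)}. ?f s (x # xs) i)"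
    by (subst prod.atLeast_Suc_atMost) auto
  also have "(\<Prod>i\<in>{Suc 1..Suc (length xs)}. ?f s (x # xs) i) =
      (\<Prod>i\<in>{1..length xs}. ?f s (x # xs) (Suc i))"
    by (rule prod.shift_bounds_cl_Suc_ivl)
  also have "\<dots> = (\<Prod>i\<in>{1..length xs}. ?f x xs i)"
    by (rule prod.cong) (auto simp: nth_Cons')
  also have "\<dots> = a ^ repetitions x xs * b ^ (length xs - repetitions x xs)"
    by (rule Cons.IH)
  also have "?f s (x # xs) 1 * \<dots> =
      a ^ repetitions s (x # xs) * b ^ (length (x # xs) - repetitions s (x # xs))"
    using repetitions_le_length[of x xs] by (simp add: Suc_diff_le ac_simps)
  finally show ?case .
qed simp

lemma fb_error_le:
  assumes "\<And>m. m < M \<Longrightarrow> measure_pmf.prob (run_ising enc m s0 [] n) {ys. dec ys \<noteq> m} \<le> e"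
    and "e \<ge> 0"
  shows "fb_error s0 n M enc dec \<le> e"
proof (cases "M = 0")
  case False
  have "(\<Sum>m<M. measure_pmf.prob (run_ising enc m s0 [] n) {ys. dec ys \<noteq> m}) \<le> real M * e"
    using sum_mono[of "{..<M}", OF assms(1)] by simp
  then show ?thesis
    using False by (simp add: fb_error_def divide_le_eq mult.commute)
qed (simp add: fb_error_def assms(2))

lemma prob_word_undecoded_le:
  fixes s0 :: 'a and cw :: "nat \<Rightarrow> 'a list"
  assumes "z \<ge> 1" "length (cw m) = S"
  defines "U \<equiv> \<lambda>m i. (s0 # cw m) ! min i S"
  shows "measure_pmf.prob (run_ising (codeword_encoder s0 U) m s0 [] n)
      {ys. take S (decoded s0 ys) \<noteq> cw m}
    \<le> (z\<^sup>2) ^ repetitions s0 (cw m) * (z * (1 + z) / 2) ^ (S - repetitions s0 (cw m)) / z ^ n"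
proof -
  have Um: "U m i = (s0 # cw m) ! i" if "i \<le> S" for i
    using that by (simp add: U_def)
  have "map (U m) [1..<Suc S] = cw m"
    by (rule nth_equalityI) (simp_all add: assms(2) Um del: upt_Suc)
  then have "measure_pmf.prob (run_ising (codeword_encoder s0 U) m s0 [] n)
      {ys. take S (decoded s0 ys) \<noteq> cw m} \<le> potential (U m) z S (s0, False, []) / z ^ n"
    using prob_undecoded_le[OF assms(1) in_sync_Nil, of U m s0 n S] by (simp add: U_def dec_state_def)
  also have "\<dots> \<le> tail_mgf (U m) z S 1 / z ^ n"
    using potential_le_tail_mgf[OF assms(1), of "U m" S s0 "[]"] assms(1) by (simp add: divide_right_mono)
  also have "tail_mgf (U m) z S 1 =
      (\<Prod>i\<in>{1..S}. if (s0 # cw m) ! i = (s0 # cw m) ! (i - 1) then z\<^sup>2 else z * (1 + z) / 2)"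
    unfolding tail_mgf_def symbol_mgf_def by (intro prod.cong) (auto simp: Um)
  also have "\<dots> = (z\<^sup>2) ^ repetitions s0 (cw m) * (z * (1 + z) / 2) ^ (S - repetitions s0 (cw m))"
    using prod_repetitions[of s0 "cw m"] assms(2) by simp
  finally show ?thesis .
qed

lemma repetition_code:
  fixes s0 :: "'a::finite"
  assumes "z \<ge> 1"
  shows "\<exists>enc dec. fb_error s0 n (card (words_with_repetitions s0 S r)) enc dec
    \<le> (z\<^sup>2) ^ r * (z * (1 + z) / 2) ^ (S - r) / z ^ n"
proof -
  define W where "W = words_with_repetitions s0 S r"
  obtain h where h: "bij_betw h {..<card W} W"
    using ex_bij_betw_nat_finite[of W]
    by (auto simp: W_def words_with_repetitions_def finite_Collect_length_eq atLeast0LessThan)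
  define enc where "enc = codeword_encoder s0 (\<lambda>m i. (s0 # h m) ! min i S)"
  define dec where "dec ys = inv_into {..<card W} h (take S (decoded s0 ys))" for ys
  have "measure_pmf.prob (run_ising enc m s0 [] n) {ys. dec ys \<noteq> m}
      \<le> (z\<^sup>2) ^ r * (z * (1 + z) / 2) ^ (S - r) / z ^ n" if m: "m < card W" for m
  proof -
    have hm: "length (h m) = S" "repetitions s0 (h m) = r"
      using bij_betwE[OF h] m by (auto simp: W_def words_with_repetitions_def)
    have "{ys. dec ys \<noteq> m} \<subseteq> {ys. take S (decoded s0 ys) \<noteq> h m}"
      using bij_betw_imp_inj_on[OF h] m by (auto simp: dec_def)
    then have "measure_pmf.prob (run_ising enc m s0 [] n) {ys. dec ys \<noteq> m}
        \<le> measure_pmf.prob (run_ising enc m s0 [] n) {ys. take S (decoded s0 ys) \<noteq> h m}"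
      by (rule measure_pmf.finite_measure_mono) simp
    also have "\<dots> \<le> (z\<^sup>2) ^ r * (z * (1 + z) / 2) ^ (S - r) / z ^ n"
      using prob_word_undecoded_le[of z h m S s0 n, OF assms hm(1)] unfolding hm(2) enc_def .
    finally show ?thesis .
  qed
  then show ?thesis
    using assms unfolding W_def by (intro exI[of _ enc] exI[of _ dec] fb_error_le) auto
qed

section \<open>An entropy bound for binomial coefficients\<close>

(* b ^ b times the probability that a Binomial(b, a / b) variable equals j. *)
definition binomial_weight :: "nat \<Rightarrow> nat \<Rightarrow> nat \<Rightarrow> nat" where
  "binomial_weight b a j = (b choose j) * a ^ j * (b - a) ^ (b - j)"

lemma binomial_weight_Suc:
  assumes "j < b"
  shows "binomial_weight b a (Suc j) * (Suc j * (b - a)) = binomial_weight b a j * ((b - j) * a)"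
proof -
  have choose: "Suc j * (b choose Suc j) = (b - j) * (b choose j)"
    using binomial_absorption[of j b] binomial_absorb_comp[of b j] by simp
  have power: "(b - a) ^ (b - Suc j) * (b - a) = (b - a) ^ (b - j)"
    using assms by (metis Suc_diff_Suc power_Suc2)
  have "binomial_weight b a (Suc j) * (Suc j * (b - a)) =
      (Suc j * (b choose Suc j)) * a ^ Suc j * ((b - a) ^ (b - Suc j) * (b - a))"
    unfolding binomial_weight_def by (simp only: ac_simps)
  also have "\<dots> = binomial_weight b a j * ((b - j) * a)"
    unfolding choose power binomial_weight_def by (simp only: power_Suc ac_simps)
  finally show ?thesis .
qed

lemma binomial_weight_mono_below:
  assumes "j < a" "a \<le> b"
  shows "binomial_weight b a j \<le> binomial_weight b a (Suc j)"
proof -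
  have "Suc j * (b - a) \<le> a * (b - j)"
    using assms by (intro mult_mono) auto
  then have "binomial_weight b a j * ((b - j) * a) \<le> binomial_weight b a (Suc j) * ((b - j) * a)"
    unfolding binomial_weight_Suc[symmetric, OF order.strict_trans2[OF assms]]
    by (simp add: mult.commute)
  then show ?thesis
    using assms by simp
qed

lemma binomial_weight_antimono_above:
  assumes "a \<le> j" "a \<le> b"
  shows "binomial_weight b a (Suc j) \<le> binomial_weight b a j"
proof (cases "j < b")
  case True
  have "(b - j) * a \<le> (b - a) * Suc j"
    using assms by (intro mult_mono) auto
  then have "binomial_weight b a (Suc j) * (Suc j * (b - a)) \<le> binomial_weight b a j * (Suc j * (b - a))"
    unfolding binomial_weight_Suc[OF True] by (simp add: mult.commute)
  then show ?thesis
    using assms True by simp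
qed (simp add: binomial_weight_def binomial_eq_0)

lemma binomial_weight_le_mode:
  assumes "a \<le> b"
  shows "binomial_weight b a j \<le> binomial_weight b a a"
proof (cases "j \<le> a")
  case True
  then show ?thesis
    by (induction j rule: inc_induct) (auto intro: order_trans binomial_weight_mono_below[OF _ assms])
next
  case False
  then have "a \<le> j"
    by simp
  then show ?thesis
    by (induction j rule: dec_induct) (auto intro: order_trans binomial_weight_antimono_above[OF _ assms])
qed

lemma power_le_binomial_weight:
  assumes "a \<le> b"
  shows "b ^ b \<le> (b + 1) * binomial_weight b a a"
proof -
  have "b ^ b = (\<Sum>j\<le>b. binomial_weight b a j)"
    using binomial[of a "b - a" b] assms by (simp add: binomial_weight_def)
  also have "\<dots> \<le> (\<Sum>j\<le>b. binomial_weight b a a)"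
    by (intro sum_mono binomial_weight_le_mode assms)
  finally show ?thesis
    by simp
qed

lemma H2_nonneg:
  assumes "0 \<le> p" "p \<le> 1"
  shows "0 \<le> H2 p"
proof -
  have "p * log 2 p \<le> 0" "(1 - p) * log 2 (1 - p) \<le> 0" if "0 < p" "p < 1"
    using that by (auto intro!: mult_nonneg_nonpos)
  then show ?thesis
    using assms by (auto simp: H2_def)
qed

lemma mult_H2_divide:
  fixes x y :: real
  assumes "0 < x" "x < y"
  shows "y * H2 (x / y) = y * log 2 y - x * log 2 x - (y - x) * log 2 (y - x)"
proof -
  have "1 - x / y = (y - x) / y"
    using assms by (simp add: field_simps)
  then have "y * H2 (x / y) = - x * log 2 (x / y) - (y - x) * log 2 ((y - x) / y)"
    using assms by (simp add: H2_def field_simps)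
  also have "\<dots> = y * log 2 y - x * log 2 x - (y - x) * log 2 (y - x)"
    using assms by (simp add: log_divide algebra_simps)
  finally show ?thesis .
qed

lemma log_binomial_ge:
  assumes "a \<le> b"
  shows "real b * H2 (real a / real b) - log 2 (real b + 1) \<le> log 2 (real (b choose a))"
proof (cases "0 < a \<and> a < b")
  case True
  have "real (b ^ b) \<le> real ((b + 1) * binomial_weight b a a)"
    using power_le_binomial_weight[OF assms] by (simp only: of_nat_le_iff)
  then have "real b ^ b \<le> (real b + 1) * (real (b choose a) * real a ^ a * real (b - a) ^ (b - a))"
    by (simp only: binomial_weight_def of_nat_mult of_nat_power of_nat_add of_nat_1)
  then have "log 2 (real b ^ b) \<le> log 2 ((real b + 1) * (real (b choose a) * real a ^ a * real (b - a) ^ (b - a)))"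
    using True by (subst log_le_cancel_iff) auto
  then have "real b * log 2 b \<le> log 2 (real b + 1) + log 2 (real (b choose a))
      + real a * log 2 a + real (b - a) * log 2 (real (b - a))"
    using True by (simp add: log_mult log_nat_power)
  then show ?thesis
    using mult_H2_divide[of "real a" "real b"] True by simp
next
  case False
  then have "H2 (real a / real b) = 0" "b choose a = 1"
    using assms by (auto simp: H2_def)
  then show ?thesis
    by simp
qed

lemma log_card_words_with_repetitions_ge:
  fixes s :: "'a::finite"
  assumes "CARD('a) \<ge> 2" "r \<le> n" "real r = q * real n"
  shows "real n * (H2 q + (1 - q) * log 2 (real CARD('a) - 1)) - log 2 (real n + 1)
    \<le> log 2 (real (card (words_with_repetitions s n r)))"
proof (cases "n = 0")
  case False
  then have q: "q = real r / real n" "real (n - r) = real n * (1 - q)"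
    using assms(2,3) by (simp_all add: field_simps)
  have "real (CARD('a) - 1) = real CARD('a) - 1"
    using assms(1) by simp
  then have "log 2 (real (card (words_with_repetitions s n r))) =
      log 2 (real (n choose r)) + real n * ((1 - q) * log 2 (real CARD('a) - 1))"
    using assms q by (simp add: card_words_with_repetitions log_mult log_nat_power)
  then show ?thesis
    using log_binomial_ge[OF assms(2)] unfolding distrib_left q(1)[symmetric] by linarith
qed (use assms in \<open>simp add: card_words_with_repetitions\<close>)

lemma repetition_weight_le_powr:
  fixes z g c q :: real
  assumes "z \<ge> 1" "0 \<le> g" "g \<le> z powr c" "r \<le> S" "real r = q * real S"
  shows "(z\<^sup>2) ^ r * g ^ (S - r) \<le> z powr (real S * (2 * q + (1 - q) * c))"
proof -
  have "(z\<^sup>2) ^ r = z powr (2 * real r)"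
    using assms(1) powr_realpow[of z "2 * r"] by (simp add: power_mult)
  moreover have "(z powr c) ^ (S - r) = z powr (c * real (S - r))"
    using assms(1) by (simp add: powr_powr powr_realpow[symmetric])
  ultimately have "(z\<^sup>2) ^ r * (z powr c) ^ (S - r) = z powr (2 * real r + c * real (S - r))"
    by (simp add: powr_add)
  also have "2 * real r + c * real (S - r) = real S * (2 * q + (1 - q) * c)"
    using assms(4,5) by (simp add: algebra_simps)
  finally have weight: "(z\<^sup>2) ^ r * (z powr c) ^ (S - r) = z powr (real S * (2 * q + (1 - q) * c))" .
  have "(z\<^sup>2) ^ r * g ^ (S - r) \<le> (z\<^sup>2) ^ r * (z powr c) ^ (S - r)"
    using assms(2,3) by (intro mult_left_mono power_mono) auto
  then show ?thesis
    unfolding weight .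
qed

lemma repetition_code_rate:
  fixes s0 :: "'a::finite"
  assumes "CARD('a) \<ge> 2" "z \<ge> 1" "z * (1 + z) / 2 \<le> z powr c" "r \<le> S" "real r = q * real S"
  shows "\<exists>M enc dec. M \<ge> 1
    \<and> real S * (H2 q + (1 - q) * log 2 (real CARD('a) - 1)) - log 2 (real S + 1) \<le> log 2 (real M)
    \<and> fb_error s0 n M enc dec \<le> z powr (real S * (2 * q + (1 - q) * c) - real n)"
proof -
  define M where "M = card (words_with_repetitions s0 S r)"
  obtain enc dec where "fb_error s0 n M enc dec \<le> (z\<^sup>2) ^ r * (z * (1 + z) / 2) ^ (S - r) / z ^ n"
    using repetition_code[OF assms(2)] unfolding M_def by blast
  also have "\<dots> \<le> z powr (real S * (2 * q + (1 - q) * c)) / z ^ n"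
    using repetition_weight_le_powr[OF assms(2) _ assms(3-5)] assms(2) by (simp add: divide_right_mono)
  also have "\<dots> = z powr (real S * (2 * q + (1 - q) * c) - real n)"
    using assms(2) by (simp add: powr_diff powr_realpow)
  finally have "fb_error s0 n M enc dec \<le> z powr (real S * (2 * q + (1 - q) * c) - real n)" .
  moreover have "M \<ge> 1"
    using assms(1,4) by (simp add: M_def card_words_with_repetitions Suc_le_eq)
  ultimately show ?thesis
    using log_card_words_with_repetitions_ge[OF assms(1,4,5)] unfolding M_def by blast
qed

section \<open>Achievable rates\<close>

lemma fb_achievable_approx:
  assumes "\<And>e. e > 0 \<Longrightarrow> \<exists>R'. R - e \<le> R' \<and> fb_achievable s0 R'"
  shows "fb_achievable s0 R"
  unfolding fb_achievable_def
proof (intro allI impI)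
  fix \<epsilon> :: real
  assume "\<epsilon> > 0"
  then obtain R' where R': "R - \<epsilon> / 2 \<le> R'" "fb_achievable s0 R'"
    using assms[of "\<epsilon> / 2"] by auto
  then obtain N where N: "\<forall>n\<ge>N. \<exists>M enc dec. M \<ge> 1 \<and> real M \<ge> 2 powr (real n * (R' - \<epsilon> / 2))
      \<and> fb_error s0 n M enc dec \<le> \<epsilon> / 2"
    using \<open>\<epsilon> > 0\<close> unfolding fb_achievable_def by (meson half_gt_zero)
  show "\<exists>N. \<forall>n\<ge>N. \<exists>M enc dec. M \<ge> 1 \<and> real M \<ge> 2 powr (real n * (R - \<epsilon>))
      \<and> fb_error s0 n M enc dec \<le> \<epsilon>"
  proof (rule exI[of _ N], intro allI impI)
    fix n
    assume "n \<ge> N"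
    then obtain M enc dec where code: "M \<ge> 1" "real M \<ge> 2 powr (real n * (R' - \<epsilon> / 2))"
      "fb_error s0 n M enc dec \<le> \<epsilon> / 2"
      using N by blast
    have "2 powr (real n * (R - \<epsilon>)) \<le> 2 powr (real n * (R' - \<epsilon> / 2))"
      using R'(1) by (intro powr_mono mult_left_mono) auto
    also have "\<dots> \<le> real M"
      by (rule code(2))
    finally have "real M \<ge> 2 powr (real n * (R - \<epsilon>))" .
    then show "\<exists>M enc dec. M \<ge> 1 \<and> real M \<ge> 2 powr (real n * (R - \<epsilon>)) \<and> fb_error s0 n M enc dec \<le> \<epsilon>"
      using code \<open>\<epsilon> > 0\<close> by (intro exI[of _ M] exI[of _ enc] exI[of _ dec]) auto
  qed
qed

lemma block_count_bounds:
  fixes x \<kappa> :: real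
  assumes "x \<ge> 0" "\<kappa> > 0" "b > 0"
  defines "j \<equiv> nat \<lfloor>x / (\<kappa> * real b)\<rfloor>"
  shows "real (j * b) * \<kappa> \<le> x" "x / \<kappa> - real b \<le> real (j * b)"
proof -
  have j: "real j \<le> x / (\<kappa> * real b)" "x / (\<kappa> * real b) - 1 \<le> real j"
    using assms by (auto simp: j_def)
  show "real (j * b) * \<kappa> \<le> x"
    using mult_right_mono[OF j(1), of "\<kappa> * real b"] assms by (simp add: field_simps)
  have "x / \<kappa> - real b = (x / (\<kappa> * real b) - 1) * real b"
    using assms by (simp add: field_simps)
  then show "x / \<kappa> - real b \<le> real (j * b)"
    using mult_right_mono[OF j(2), of "real b"] by simp
qed

lemma repetition_code_blocklength:
  fixes s0 :: "'a::finite"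
  assumes "CARD('a) \<ge> 2" "a \<le> b" "0 < b" "z > 1" "z * (1 + z) / 2 \<le> z powr c" "c \<ge> 1"
    and "0 \<le> L" "L \<le> real n"
  defines "q \<equiv> real a / real b"
  defines "F \<equiv> H2 q + (1 - q) * log 2 (real CARD('a) - 1)" and "\<kappa> \<equiv> 2 * q + (1 - q) * c"
  shows "\<exists>M enc dec. M \<ge> 1
    \<and> real n * (F / \<kappa>) - ((L / \<kappa> + real b) * F + log 2 (real n + 1)) \<le> log 2 (real M)
    \<and> fb_error s0 n M enc dec \<le> z powr (- L)"
proof -
  have q: "0 \<le> q" "q \<le> 1"
    using assms(2,3) by (auto simp: q_def)
  have "F \<ge> 0"
    using H2_nonneg[OF q] q assms(1) by (simp add: F_def)
  have "(1 - q) * 1 \<le> (1 - q) * c"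
    using q assms(6) by (intro mult_left_mono) auto
  then have "\<kappa> \<ge> 1"
    using q by (simp add: \<kappa>_def)
  (* The codewords consist of j blocks of b symbols with a repetitions each; the slack L in
     S \<kappa> \<le> n - L makes the Chernoff bound z powr (S \<kappa> - n) small. *)
  define j where "j = nat \<lfloor>(real n - L) / (\<kappa> * real b)\<rfloor>"
  define S where "S = j * b"
  have S: "real S * \<kappa> \<le> real n - L" "(real n - L) / \<kappa> - real b \<le> real S"
    using block_count_bounds[of "real n - L" \<kappa> b] assms(3,8) \<open>\<kappa> \<ge> 1\<close>
    unfolding j_def S_def by auto
  have "j * a \<le> S" "real (j * a) = q * real S"
    using assms(2,3) by (auto simp: q_def S_def)
  then obtain M enc dec where code: "M \<ge> 1" "real S * F - log 2 (real S + 1) \<le> log 2 (real M)"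
    "fb_error s0 n M enc dec \<le> z powr (real S * \<kappa> - real n)"
    using repetition_code_rate[OF assms(1) less_imp_le[OF assms(4)] assms(5), of "j * a" S q s0 n]
    unfolding F_def[symmetric] \<kappa>_def[symmetric] by blast
  have "z powr (real S * \<kappa> - real n) \<le> z powr (- L)"
    using S(1) assms(4) by (intro powr_mono) auto
  have "real S \<le> real n"
    using S(1) \<open>\<kappa> \<ge> 1\<close> assms(7) mult_left_mono[of 1 \<kappa> "real S"] by linarith
  then have "log 2 (real S + 1) \<le> log 2 (real n + 1)"
    by simp
  have "real n * (F / \<kappa>) - ((L / \<kappa> + real b) * F + log 2 (real n + 1))
      = ((real n - L) / \<kappa> - real b) * F - log 2 (real n + 1)"
    by (simp add: diff_divide_distrib algebra_simps)
  also have "\<dots> \<le> log 2 (real M)"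
    using mult_right_mono[OF S(2) \<open>F \<ge> 0\<close>] \<open>log 2 (real S + 1) \<le> log 2 (real n + 1)\<close> code(2)
    by linarith
  finally show ?thesis
    using code(1) order_trans[OF code(3) \<open>z powr (real S * \<kappa> - real n) \<le> z powr (- L)\<close>]
    by blast
qed

lemma fb_achievable_repetition_codes:
  fixes s0 :: "'a::finite"
  assumes "CARD('a) \<ge> 2" "a \<le> b" "0 < b" "z > 1" "z * (1 + z) / 2 \<le> z powr c" "c \<ge> 1"
  defines "q \<equiv> real a / real b"
  shows "fb_achievable s0 ((H2 q + (1 - q) * log 2 (real CARD('a) - 1)) / (2 * q + (1 - q) * c))"
    (is "fb_achievable s0 (?F / ?\<kappa>)")
  unfolding fb_achievable_def
proof (intro allI impI)
  fix \<epsilon> :: real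
  assume "\<epsilon> > 0"
  define L where "L = max 0 (- log z \<epsilon>)"
  have "z powr (- L) \<le> z powr (log z \<epsilon>)"
    using assms(4) by (intro powr_mono) (auto simp: L_def)
  then have "z powr (- L) \<le> \<epsilon>"
    using assms(4) \<open>\<epsilon> > 0\<close> by simp
  have "eventually (\<lambda>n. L \<le> real n) sequentially"
    by real_asymp
  moreover have "eventually (\<lambda>n. (L / ?\<kappa> + real b) * ?F + log 2 (real n + 1) \<le> \<epsilon> * real n) sequentially"
    using \<open>\<epsilon> > 0\<close> by real_asymp
  ultimately obtain N where N: "\<And>n. n \<ge> N \<Longrightarrow>
      L \<le> real n \<and> (L / ?\<kappa> + real b) * ?F + log 2 (real n + 1) \<le> \<epsilon> * real n"
    by (metis (no_types, lifting) eventually_conj eventually_sequentially)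
  show "\<exists>N. \<forall>n\<ge>N. \<exists>M enc dec. M \<ge> 1 \<and> real M \<ge> 2 powr (real n * (?F / ?\<kappa> - \<epsilon>))
      \<and> fb_error s0 n M enc dec \<le> \<epsilon>"
  proof (rule exI[of _ N], intro allI impI)
    fix n
    assume "n \<ge> N"
    then obtain M enc dec where code: "M \<ge> 1" "fb_error s0 n M enc dec \<le> z powr (- L)"
      "real n * (?F / ?\<kappa>) - ((L / ?\<kappa> + real b) * ?F + log 2 (real n + 1)) \<le> log 2 (real M)"
      using repetition_code_blocklength[OF assms(1-6), of L n s0] N unfolding q_def L_def by force
    then have "real n * (?F / ?\<kappa> - \<epsilon>) \<le> log 2 (real M)"
      using N[OF \<open>n \<ge> N\<close>] by (simp add: right_diff_distrib mult.commute)
    then have "2 powr (real n * (?F / ?\<kappa> - \<epsilon>)) \<le> real M"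
      using code(1) by (simp add: le_log_iff)
    then show "\<exists>M enc dec. M \<ge> 1 \<and> real M \<ge> 2 powr (real n * (?F / ?\<kappa> - \<epsilon>))
        \<and> fb_error s0 n M enc dec \<le> \<epsilon>"
      using code(1) order_trans[OF code(2) \<open>z powr (- L) \<le> \<epsilon>\<close>] by blast
  qed
qed

definition ising_rate_objective :: "nat \<Rightarrow> real \<Rightarrow> real" where
  "ising_rate_objective k p = 2 * (H2 p + (1 - p) * log 2 (real k - 1)) / (p + 3)"

lemma fb_achievable_fraction:
  fixes s0 :: "'a::finite"
  assumes "CARD('a) \<ge> 2" "a \<le> b" "0 < b"
  shows "fb_achievable s0 (ising_rate_objective CARD('a) (real a / real b))"
proof (rule fb_achievable_approx)
  fix e :: real
  assume "e > 0"
  define q where "q = real a / real b"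
  define F where "F = H2 q + (1 - q) * log 2 (real CARD('a) - 1)"
  (* c z is chosen with z (1 + z) / 2 = z powr c z; it tends to 3/2 as z tends to 1. *)
  define c where "c z = log z (z * (1 + z) / 2)" for z :: real
  have q: "0 \<le> q" "q \<le> 1"
    using assms(2,3) by (auto simp: q_def)
  have "(c \<longlongrightarrow> 3 / 2) (at_right 1)"
    unfolding c_def log_def by real_asymp
  then have "((\<lambda>z. F / (2 * q + (1 - q) * c z)) \<longlongrightarrow> F / (2 * q + (1 - q) * (3 / 2))) (at_right 1)"
    using q by (intro tendsto_intros) (auto simp: field_simps)
  moreover have "F / (2 * q + (1 - q) * (3 / 2)) = 2 * F / (q + 3)"
    by (simp add: field_simps)
  ultimately have "eventually (\<lambda>z. 2 * F / (q + 3) - e < F / (2 * q + (1 - q) * c z)) (at_right 1)"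
    using \<open>e > 0\<close> by (intro order_tendstoD(1)) auto
  moreover have "eventually (\<lambda>z. z > 1) (at_right (1 :: real))"
    by (rule eventually_at_right_less)
  ultimately obtain z where z: "z > 1" "2 * F / (q + 3) - e < F / (2 * q + (1 - q) * c z)"
    using eventually_happens'[OF trivial_limit_at_right_real eventually_conj] by blast
  have "z * (1 + z) / 2 = z powr c z"
    using z(1) by (simp add: c_def)
  moreover have "log z z \<le> log z (z * (1 + z) / 2)"
    using z(1) by (subst log_le_cancel_iff) (auto simp: field_simps add_pos_pos)
  then have "c z \<ge> 1"
    using z(1) by (simp add: c_def)
  ultimately have "fb_achievable s0 (F / (2 * q + (1 - q) * c z))"
    using fb_achievable_repetition_codes[OF assms(1-3) z(1)] unfolding F_def q_def by simp
  moreover have "ising_rate_objective CARD('a) (real a / real b) = 2 * F / (q + 3)"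
    by (simp add: ising_rate_objective_def F_def q_def)
  ultimately show "\<exists>R'. ising_rate_objective CARD('a) (real a / real b) - e \<le> R' \<and> fb_achievable s0 R'"
    using z(2) less_imp_le by auto
qed

lemma neg_mult_ln_le:
  fixes x :: real
  assumes "0 < x"
  shows "- (x * ln x) \<le> 1 - x"
proof -
  have "x * - ln x \<le> x * (1 / x - 1)"
    using ln_le_minus_one[of "1 / x"] assms by (intro mult_left_mono) (auto simp: ln_div)
  then show ?thesis
    using assms by (simp add: right_diff_distrib)
qed

lemma H2_le:
  assumes "0 \<le> p" "p \<le> 1"
  shows "H2 p \<le> 1 / ln 2"
proof (cases "p = 0 \<or> p = 1")
  case False
  then have "H2 p = (- (p * ln p) - (1 - p) * ln (1 - p)) / ln 2"
    by (simp add: H2_def log_def diff_divide_distrib)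
  also have "\<dots> \<le> ((1 - p) + p) / ln 2"
    using neg_mult_ln_le[of p] neg_mult_ln_le[of "1 - p"] assms False by (intro divide_right_mono) auto
  finally show ?thesis
    by simp
qed (auto simp: H2_def)

lemma bdd_above_ising_rate_objective: "bdd_above (ising_rate_objective k ` {0..1})"
proof (rule bdd_aboveI2)
  fix p :: real
  assume p: "p \<in> {0..1}"
  define B where "B = 1 / ln 2 + \<bar>log 2 (real k - 1)\<bar>"
  have "(1 - p) * log 2 (real k - 1) \<le> (1 - p) * \<bar>log 2 (real k - 1)\<bar>"
    using p by (intro mult_left_mono) auto
  then have "H2 p + (1 - p) * log 2 (real k - 1) \<le> B"
    using p H2_le[of p] mult_left_le_one_le[of "\<bar>log 2 (real k - 1)\<bar>" "1 - p"] by (auto simp: B_def)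
  then have "ising_rate_objective k p \<le> 2 * B / (p + 3)"
    using p unfolding ising_rate_objective_def by (intro divide_right_mono) auto
  also have "\<dots> \<le> 2 * B / 1"
    using p by (intro divide_left_mono) (auto simp: B_def)
  finally show "ising_rate_objective k p \<le> 2 * B"
    by simp
qed

lemma fraction_between:
  fixes x y :: real
  assumes "0 \<le> x" "x < y" "y \<le> 1"
  obtains a b :: nat where "a \<le> b" "0 < b" "x < real a / real b" "real a / real b < y"
proof -
  obtain r where "r \<in> \<rat>" "x < r" "r < y"
    using Rats_dense_in_real[OF assms(2)] by blast
  then obtain i :: int and b :: nat where r: "r = real_of_int i / real b" "b \<noteq> 0"
    unfolding Rats_eq_int_div_nat by blast
  have "0 < real_of_int i / real b" "real_of_int i / real b < 1"
    using \<open>x < r\<close> \<open>r < y\<close> assms r(1) by linarith+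
  then have "0 < i" "real_of_int i < real b"
    using r(2) by (simp_all add: zero_less_divide_iff divide_less_eq)
  then show ?thesis
    using that[of "nat i" b] r \<open>x < r\<close> \<open>r < y\<close> by auto
qed

(* The endpoints are fractions themselves; inside (0, 1) the objective is continuous. *)
lemma ising_rate_objective_fraction_approx:
  assumes "0 \<le> p" "p \<le> 1" "e > 0"
  obtains a b :: nat where "a \<le> b" "0 < b"
    "ising_rate_objective k p - e < ising_rate_objective k (real a / real b)"
proof (cases "p = 0 \<or> p = 1")
  case True
  then show ?thesis
    using that[of "nat \<lfloor>p\<rfloor>" 1] assms by auto
next
  case False
  define h where "h x = 2 * (- x * log 2 x - (1 - x) * log 2 (1 - x) + (1 - x) * log 2 (real k - 1)) / (x + 3)"
    for x :: real
  have h: "h x = ising_rate_objective k x" if "0 < x" "x < 1" for x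
    using that by (simp add: h_def ising_rate_objective_def H2_def)
  have "isCont h p"
    using assms False unfolding h_def by (intro continuous_intros) auto
  then obtain d where "d > 0" and d: "\<And>x. x \<noteq> p \<Longrightarrow> \<bar>x - p\<bar> < d \<Longrightarrow> \<bar>h x - h p\<bar> < e"
    using LIM_D[OF \<open>isCont h p\<close>[unfolded isCont_def] assms(3)] by auto
  obtain a b :: nat where ab: "a \<le> b" "0 < b"
    "max 0 (p - d) < real a / real b" "real a / real b < min 1 (p + d)"
    using fraction_between[of "max 0 (p - d)" "min 1 (p + d)"] assms False \<open>d > 0\<close> by auto
  have "\<bar>real a / real b - p\<bar> < d"
    using ab(3,4) by linarith
  then have "h p - e < h (real a / real b)"
    using d[of "real a / real b"] assms(3) by (cases "real a / real b = p") auto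
  then show ?thesis
    using that[OF ab(1,2)] h[of p] h[of "real a / real b"] ab assms False by auto
qed

lemma ising_rate_fraction_approx:
  assumes "e > 0"
  obtains a b :: nat where "a \<le> b" "0 < b" "ising_rate k - e < ising_rate_objective k (real a / real b)"
proof -
  have "ising_rate k - e / 2 < (SUP p\<in>{0..1}. ising_rate_objective k p)"
    using assms by (simp add: ising_rate_def ising_rate_objective_def)
  then obtain p where p: "p \<in> {0..1}" "ising_rate k - e / 2 < ising_rate_objective k p"
    using less_cSUP_iff[OF _ bdd_above_ising_rate_objective] by force
  then obtain a b :: nat where "a \<le> b" "0 < b"
    "ising_rate_objective k p - e / 2 < ising_rate_objective k (real a / real b)"
    using ising_rate_objective_fraction_approx[of p "e / 2" k] assms by auto
  then show ?thesis
    using that p by force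
qed

theorem theorem4:
  fixes s0 :: "'a::finite"
  assumes "CARD('a) \<ge> 2"
  shows "fb_achievable s0 (ising_rate CARD('a))"
proof (rule fb_achievable_approx)
  fix e :: real
  assume "e > 0"
  then obtain a b :: nat where ab: "a \<le> b" "0 < b"
    "ising_rate CARD('a) - e < ising_rate_objective CARD('a) (real a / real b)"
    using ising_rate_fraction_approx by blast
  moreover have "fb_achievable s0 (ising_rate_objective CARD('a) (real a / real b))"
    by (rule fb_achievable_fraction[OF assms ab(1,2)])
  ultimately show "\<exists>R'. ising_rate CARD('a) - e \<le> R' \<and> fb_achievable s0 R'"
    using less_imp_le by blast
qed

end
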